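(* An ample groupoid $\mathcal G$ is minimal if and only if, for every nonempty compact open subset $V$ of $\mathcal G^{(0)}$, the element $1_V$ generates $A_{\mathbb B}(\mathcal G)$ as a two-sided ideal.
   Context: $\mathbb B=(\{0,1\},\text{or},\text{and})$ is the Boolean semifield. An ample groupoid is a topological groupoid whose unit space $\mathcal G^{(0)}$ is locally compact Hausdorff and totally disconnected and whose source and range maps $s,r$ are local homeomorphisms ($\mathcal G$ need not be Hausdorff). A subset $D\subseteq\mathcal G^{(0)}$ is invariant if $s(\gamma)\in D$ implies $r(\gamma)\in D$; $\mathcal G$ is minimal if $\mathcal G^{(0)}$ has no open invariant subsets other than $\varnothing$ and $\mathcal G^{(0)}$. The Steinberg algebra $A_{\mathbb B}(\mathcal G)$ is the set of $\mathbb B$-valued functions on $\mathcal G$ that are finite sums of characteristic functions $1_U$ of compact open bisections $U$ (subsets on which $s,r$ are homeomorphisms onto their images), with pointwise addition and convolution $(f*g)(\gamma)=\sum_{\alpha\beta=\gamma}f(\alpha)g(\beta)$. An ideal of this algebra is a subset closed under addition, containing $0$, and closed under left and right multiplication by arbitrary elements of the algebra. *)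

theory Defs
  imports "HOL-Analysis.Analysis"
begin

text \<open>A groupoid is modelled on a whole type 'a: source s, range r, partial product m
  (defined on pairs (x,y) with s x = r y), inverse iv. The unit space is the image of s.\<close>

definition groupoid :: "('a \<Rightarrow> 'a) \<Rightarrow> ('a \<Rightarrow> 'a) \<Rightarrow> ('a \<Rightarrow> 'a \<Rightarrow> 'a) \<Rightarrow> ('a \<Rightarrow> 'a) \<Rightarrow> bool" where
  "groupoid s r m iv \<longleftrightarrow>
     (\<forall>x. s (s x) = s x \<and> r (s x) = s x \<and> s (r x) = r x \<and> r (r x) = r x) \<and>
     (\<forall>x y. s x = r y \<longrightarrow> s (m x y) = s y \<and> r (m x y) = r x) \<and>
     (\<forall>x y z. s x = r y \<and> s y = r z \<longrightarrow> m (m x y) z = m x (m y z)) \<and>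
     (\<forall>x. m (r x) x = x \<and> m x (s x) = x) \<and>
     (\<forall>x. s (iv x) = r x \<and> r (iv x) = s x \<and> m x (iv x) = r x \<and> m (iv x) x = s x)"

definition units :: "('a \<Rightarrow> 'a) \<Rightarrow> 'a set" where
  "units s = range s"

definition totally_disconnected_space :: "'a topology \<Rightarrow> bool" where
  "totally_disconnected_space X \<longleftrightarrow> (\<forall>x y. connected_component_of X x y \<longrightarrow> x = y)"

definition local_homeo_onto :: "('a::topological_space \<Rightarrow> 'a) \<Rightarrow> 'a set \<Rightarrow> bool" where
  "local_homeo_onto f Y \<longleftrightarrow> f ` UNIV \<subseteq> Y \<and>
     (\<forall>x. \<exists>U. open U \<and> x \<in> U \<and> openin (top_of_set Y) (f ` U) \<and>
            homeomorphic_map (top_of_set U) (top_of_set (f ` U)) f)"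

definition ample_groupoid ::
  "('a::topological_space \<Rightarrow> 'a) \<Rightarrow> ('a \<Rightarrow> 'a) \<Rightarrow> ('a \<Rightarrow> 'a \<Rightarrow> 'a) \<Rightarrow> ('a \<Rightarrow> 'a) \<Rightarrow> bool" where
  "ample_groupoid s r m iv \<longleftrightarrow>
     groupoid s r m iv \<and>
     continuous_on {(x, y). s x = r y} (\<lambda>(x, y). m x y) \<and>
     continuous_on UNIV iv \<and>
     locally_compact_space (top_of_set (units s)) \<and>
     Hausdorff_space (top_of_set (units s)) \<and>
     totally_disconnected_space (top_of_set (units s)) \<and>
     local_homeo_onto s (units s) \<and> local_homeo_onto r (units s)"

definition invariant :: "('a \<Rightarrow> 'a) \<Rightarrow> ('a \<Rightarrow> 'a) \<Rightarrow> 'a set \<Rightarrow> bool" where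
  "invariant s r D \<longleftrightarrow> D \<subseteq> units s \<and> (\<forall>g. s g \<in> D \<longrightarrow> r g \<in> D)"

definition minimal_groupoid :: "('a::topological_space \<Rightarrow> 'a) \<Rightarrow> ('a \<Rightarrow> 'a) \<Rightarrow> bool" where
  "minimal_groupoid s r \<longleftrightarrow>
     (\<forall>D. openin (top_of_set (units s)) D \<and> invariant s r D \<longrightarrow> D = {} \<or> D = units s)"

definition bisection :: "('a::topological_space \<Rightarrow> 'a) \<Rightarrow> ('a \<Rightarrow> 'a) \<Rightarrow> 'a set \<Rightarrow> bool" where
  "bisection s r U \<longleftrightarrow>
     homeomorphic_map (top_of_set U) (top_of_set (s ` U)) s \<and>
     homeomorphic_map (top_of_set U) (top_of_set (r ` U)) r"

definition compact_open_bisection :: "('a::topological_space \<Rightarrow> 'a) \<Rightarrow> ('a \<Rightarrow> 'a) \<Rightarrow> 'a set \<Rightarrow> bool" where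
  "compact_open_bisection s r U \<longleftrightarrow> compact U \<and> open U \<and> bisection s r U"

definition chi :: "'a set \<Rightarrow> 'a \<Rightarrow> bool" where
  "chi U = (\<lambda>g. g \<in> U)"

definition bplus :: "('a \<Rightarrow> bool) \<Rightarrow> ('a \<Rightarrow> bool) \<Rightarrow> 'a \<Rightarrow> bool" where
  "bplus f h = (\<lambda>g. f g \<or> h g)"

definition conv :: "('a \<Rightarrow> 'a) \<Rightarrow> ('a \<Rightarrow> 'a) \<Rightarrow> ('a \<Rightarrow> 'a \<Rightarrow> 'a) \<Rightarrow>
    ('a \<Rightarrow> bool) \<Rightarrow> ('a \<Rightarrow> bool) \<Rightarrow> 'a \<Rightarrow> bool" where
  "conv s r m f h = (\<lambda>g. \<exists>a b. s a = r b \<and> m a b = g \<and> f a \<and> h b)"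

text \<open>Steinberg algebra over the Boolean semifield: finite sums (= pointwise or) of
  characteristic functions of compact open bisections.\<close>
definition steinberg :: "('a::topological_space \<Rightarrow> 'a) \<Rightarrow> ('a \<Rightarrow> 'a) \<Rightarrow> ('a \<Rightarrow> bool) set" where
  "steinberg s r = {f. \<exists>F. finite F \<and> (\<forall>U\<in>F. compact_open_bisection s r U) \<and>
                        f = (\<lambda>g. \<exists>U\<in>F. g \<in> U)}"

definition is_ideal :: "('a::topological_space \<Rightarrow> 'a) \<Rightarrow> ('a \<Rightarrow> 'a) \<Rightarrow> ('a \<Rightarrow> 'a \<Rightarrow> 'a) \<Rightarrow>
    ('a \<Rightarrow> bool) set \<Rightarrow> bool" where
  "is_ideal s r m I \<longleftrightarrow> I \<subseteq> steinberg s r \<and> (\<lambda>_. False) \<in> I \<and>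
     (\<forall>f\<in>I. \<forall>h\<in>I. bplus f h \<in> I) \<and>
     (\<forall>a\<in>steinberg s r. \<forall>f\<in>I. conv s r m a f \<in> I \<and> conv s r m f a \<in> I)"

definition ideal_generated :: "('a::topological_space \<Rightarrow> 'a) \<Rightarrow> ('a \<Rightarrow> 'a) \<Rightarrow> ('a \<Rightarrow> 'a \<Rightarrow> 'a) \<Rightarrow>
    ('a \<Rightarrow> bool) \<Rightarrow> ('a \<Rightarrow> bool) set" where
  "ideal_generated s r m f = \<Inter>{I. is_ideal s r m I \<and> f \<in> I}"

end

(*
  If G is minimal and V is a nonempty compact open set of units, every unit x is the range
  of an arrow g with source in V. A compact open bisection B around such g with s(B) in V
  gives 1_B = 1_B * 1_V and 1_r(B) = 1_B * 1_(B^-1) in every ideal containing 1_V; by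
  compactness the ideal then contains 1_W for all compact open sets of units W, and hence
  1_U = 1_U * 1_s(U) for every compact open bisection U. Conversely, a proper nonempty open
  invariant set D of units yields the proper ideal of functions supported on s^-1(D), which
  contains 1_K for every compact open K inside D.
*)
theory Submission
  imports Defs
begin

lemma compact_openin_neighbourhood_base:
  fixes S :: "'a::topological_space set"
  assumes lc: "locally_compact_space (top_of_set S)" and H: "Hausdorff_space (top_of_set S)"
    and td: "totally_disconnected_space (top_of_set S)"
    and W: "openin (top_of_set S) W" and "x \<in> W"
  obtains K where "compact K" "openin (top_of_set S) K" "x \<in> K" "K \<subseteq> W"
proof -
  have "x \<in> S" using W \<open>x \<in> W\<close> openin_imp_subset by blast
  then obtain U K0 where U: "openin (top_of_set S) U" and K0: "compactin (top_of_set S) K0"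
    and "x \<in> U" "U \<subseteq> K0"
    using lc unfolding locally_compact_space_def by auto
  have "connected_component_of_set (top_of_set S) x = {x}"
    using td \<open>x \<in> S\<close> unfolding totally_disconnected_space_def
    by (auto simp: connected_component_of_refl)
  then have "{x} \<in> connected_components_of (top_of_set S)"
    by (metis \<open>x \<in> S\<close> connected_component_in_connected_components_of topspace_euclidean_subtopology)
  then obtain K V where K: "openin (top_of_set S) K" and V: "openin (top_of_set S) V"
    and KV: "disjnt K V" "K \<union> V = S" and "{x} \<subseteq> K" "K \<subseteq> U \<inter> W"
  proof (rule wilder_locally_compact_component_thm[OF lc H _ _ openin_Int[OF U W]])
    show "compactin (top_of_set S) {x}" using \<open>x \<in> S\<close> by simp
    show "{x} \<subseteq> U \<inter> W" using \<open>x \<in> U\<close> \<open>x \<in> W\<close> by simp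
  qed (use that in simp_all)
  have "K = S - V" using KV by (auto simp: disjnt_def)
  then have "closedin (top_of_set S) K" using V by auto
  then have "compactin (top_of_set S) K"
    using closed_compactin K0 \<open>K \<subseteq> U \<inter> W\<close> \<open>U \<subseteq> K0\<close> by blast
  then have "compact K" by (simp add: compactin_subtopology)
  with K \<open>{x} \<subseteq> K\<close> \<open>K \<subseteq> U \<inter> W\<close> show thesis using that by blast
qed

lemma local_homeo_onto_imp_continuous:
  assumes "local_homeo_onto f Y"
  shows "continuous_on UNIV f"
proof -
  let ?F = "{U. open U \<and> continuous_on U f}"
  have "x \<in> \<Union>?F" for x
  proof -
    obtain U where "open U" "x \<in> U" and "homeomorphic_map (top_of_set U) (top_of_set (f ` U)) f"
      using assms unfolding local_homeo_onto_def by blast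
    then have "continuous_on U f"
      using homeomorphic_imp_continuous_map continuous_map_subtopology_eu by blast
    then show ?thesis using \<open>open U\<close> \<open>x \<in> U\<close> by blast
  qed
  moreover have "continuous_on (\<Union>?F) f" by (rule continuous_on_open_Union) auto
  ultimately show ?thesis by (metis UNIV_eq_I)
qed

lemma local_homeo_onto_open_image:
  assumes lh: "local_homeo_onto f Y" and "open Y" "open A"
  shows "open (f ` A)"
proof (rule open_subopen[THEN iffD2], rule ballI)
  fix y assume "y \<in> f ` A"
  then obtain x where "x \<in> A" "y = f x" by blast
  obtain U where U: "open U" "x \<in> U" "openin (top_of_set Y) (f ` U)"
     and h: "homeomorphic_map (top_of_set U) (top_of_set (f ` U)) f"
    using lh unfolding local_homeo_onto_def by blast
  have "openin (top_of_set U) (A \<inter> U)"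
    using openin_open_Int[OF \<open>open A\<close>, of U] by (simp add: Int_commute)
  then have "openin (top_of_set (f ` U)) (f ` (A \<inter> U))"
    using homeomorphic_map_openness[OF h, of "A \<inter> U"] by simp
  then have "open (f ` (A \<inter> U))"
    using openin_trans[OF _ U(3)] \<open>open Y\<close> by (simp add: openin_open_eq)
  moreover have "y \<in> f ` (A \<inter> U)" using \<open>x \<in> A\<close> \<open>y = f x\<close> U by simp
  moreover have "f ` (A \<inter> U) \<subseteq> f ` A" by blast
  ultimately show "\<exists>T. open T \<and> y \<in> T \<and> T \<subseteq> f ` A" by blast
qed

lemma homeomorphic_map_compact_iff_inj_on:
  assumes "compact K" "continuous_on K f" "Hausdorff_space (top_of_set T)" "f ` K \<subseteq> T"
  shows "homeomorphic_map (top_of_set K) (top_of_set (f ` K)) f \<longleftrightarrow> inj_on f K"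
proof
  assume "homeomorphic_map (top_of_set K) (top_of_set (f ` K)) f"
  then show "inj_on f K" using homeomorphic_imp_injective_map by fastforce
next
  assume "inj_on f K"
  show "homeomorphic_map (top_of_set K) (top_of_set (f ` K)) f"
  proof (rule continuous_imp_homeomorphic_map)
    show "continuous_map (top_of_set K) (top_of_set (f ` K)) f"
      using assms(2) by (simp add: continuous_map_subtopology_eu)
    show "compact_space (top_of_set K)"
      using assms(1) by (simp add: compact_space_subtopology)
    have "Hausdorff_space (subtopology (top_of_set T) (f ` K))"
      using assms(3) by (rule Hausdorff_space_subtopology)
    then show "Hausdorff_space (top_of_set (f ` K))"
      using assms(4) by (simp add: subtopology_subtopology Int_absorb1)
  qed (use \<open>inj_on f K\<close> in auto)
qed

lemma compact_Int_vimage_homeomorphic_map: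
  assumes h: "homeomorphic_map (top_of_set U) (top_of_set (f ` U)) f" and "compact K" "K \<subseteq> f ` U"
  shows "compact (U \<inter> f -` K)"
proof -
  have "f ` (U \<inter> f -` K) = K" using assms(3) by blast
  then have "compactin (top_of_set (f ` U)) (f ` (U \<inter> f -` K))"
    using assms(2,3) by (simp add: compactin_subtopology)
  then have "compactin (top_of_set U) (U \<inter> f -` K)"
    using homeomorphic_map_compactness[OF h, of "U \<inter> f -` K"] by simp
  then show ?thesis by (simp add: compactin_subtopology)
qed

section \<open>Boolean convolution and the Steinberg algebra\<close>

definition mult_set :: "('a \<Rightarrow> 'a) \<Rightarrow> ('a \<Rightarrow> 'a) \<Rightarrow> ('a \<Rightarrow> 'a \<Rightarrow> 'a) \<Rightarrow> 'a set \<Rightarrow> 'a set \<Rightarrow> 'a set"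
  where "mult_set s r m U U' = {m a b |a b. s a = r b \<and> a \<in> U \<and> b \<in> U'}"

lemma conv_chi: "conv s r m (chi U) (chi U') = chi (mult_set s r m U U')"
  unfolding conv_def chi_def mult_set_def by (rule ext) blast

lemma conv_Bex_chi:
  "conv s r m (\<lambda>g. \<exists>U\<in>F. g \<in> U) (\<lambda>g. \<exists>U\<in>H. g \<in> U)
    = (\<lambda>g. \<exists>W\<in>(\<lambda>(U, U'). mult_set s r m U U') ` (F \<times> H). g \<in> W)"
proof (rule ext, rule iffI)
  fix g assume "conv s r m (\<lambda>g. \<exists>U\<in>F. g \<in> U) (\<lambda>g. \<exists>U\<in>H. g \<in> U) g"
  then obtain a b U U' where "s a = r b" "m a b = g" "U \<in> F" "a \<in> U" "U' \<in> H" "b \<in> U'"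
    unfolding conv_def by blast
  then show "\<exists>W\<in>(\<lambda>(U, U'). mult_set s r m U U') ` (F \<times> H). g \<in> W"
    by (intro bexI[of _ "mult_set s r m U U'"]) (auto simp: mult_set_def)
next
  fix g assume "\<exists>W\<in>(\<lambda>(U, U'). mult_set s r m U U') ` (F \<times> H). g \<in> W"
  then obtain U U' a b where "U \<in> F" "U' \<in> H" "g = m a b" "s a = r b" "a \<in> U" "b \<in> U'"
    unfolding mult_set_def by blast
  then show "conv s r m (\<lambda>g. \<exists>U\<in>F. g \<in> U) (\<lambda>g. \<exists>U\<in>H. g \<in> U) g"
    unfolding conv_def by blast
qed

lemma finite_Bex_mem_if_bplus_closed:
  assumes "finite F" "(\<lambda>_. False) \<in> I" "\<forall>f\<in>I. \<forall>h\<in>I. bplus f h \<in> I" "\<forall>x\<in>F. f x \<in> I"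
  shows "(\<lambda>g. \<exists>x\<in>F. f x g) \<in> I"
  using assms(1,4)
proof (induction F rule: finite_induct)
  case empty
  then show ?case using assms(2) by simp
next
  case (insert x F)
  have "(\<lambda>g. \<exists>y\<in>insert x F. f y g) = bplus (f x) (\<lambda>g. \<exists>y\<in>F. f y g)"
    unfolding bplus_def by auto
  then show ?case using insert assms(3) by simp
qed

lemma chi_compact_mem_if_locally_mem:
  assumes "(\<lambda>_. False) \<in> I" "\<forall>f\<in>I. \<forall>h\<in>I. bplus f h \<in> I" "compact W"
    and local: "\<And>x. x \<in> W \<Longrightarrow> \<exists>N. open N \<and> x \<in> N \<and> N \<subseteq> W \<and> chi N \<in> I"
  shows "chi W \<in> I"
proof -
  let ?C = "{N. open N \<and> N \<subseteq> W \<and> chi N \<in> I}"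
  have "W \<subseteq> \<Union>?C" using local by blast
  then obtain F where F: "F \<subseteq> ?C" "finite F" "W \<subseteq> \<Union>F"
    using compactE[OF \<open>compact W\<close>, of ?C] by blast
  then have "chi W = (\<lambda>g. \<exists>N\<in>F. chi N g)" unfolding chi_def using F(1) by (intro ext) blast
  also have "\<dots> \<in> I"
    using F by (intro finite_Bex_mem_if_bplus_closed assms(1,2)) auto
  finally show ?thesis .
qed

lemma chi_in_steinberg: "compact_open_bisection s r U \<Longrightarrow> chi U \<in> steinberg s r"
  unfolding steinberg_def chi_def by (rule CollectI, rule exI[of _ "{U}"]) auto

lemma steinberg_zero: "(\<lambda>_. False) \<in> steinberg s r"
  unfolding steinberg_def by (rule CollectI, rule exI[of _ "{}"]) auto

lemma bplus_in_steinberg: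
  assumes "f \<in> steinberg s r" "h \<in> steinberg s r"
  shows "bplus f h \<in> steinberg s r"
proof -
  obtain F H where "finite F" "\<forall>U\<in>F. compact_open_bisection s r U" "f = (\<lambda>g. \<exists>U\<in>F. g \<in> U)"
    and "finite H" "\<forall>U\<in>H. compact_open_bisection s r U" "h = (\<lambda>g. \<exists>U\<in>H. g \<in> U)"
    using assms unfolding steinberg_def by blast
  then show ?thesis unfolding steinberg_def
    by (intro CollectI exI[of _ "F \<union> H"]) (auto simp: bplus_def)
qed

lemma steinberg_subset_ideal:
  assumes "is_ideal s r m I" "\<And>U. compact_open_bisection s r U \<Longrightarrow> chi U \<in> I"
  shows "steinberg s r \<subseteq> I"
proof
  fix f assume "f \<in> steinberg s r"
  then obtain F where "finite F" "\<forall>U\<in>F. compact_open_bisection s r U" "f = (\<lambda>g. \<exists>U\<in>F. chi U g)"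
    unfolding steinberg_def chi_def by blast
  then show "f \<in> I"
    using finite_Bex_mem_if_bplus_closed[of F I chi] assms unfolding is_ideal_def by blast
qed

lemma ideal_generated_subset:
  assumes "is_ideal s r m I" "f \<in> I"
  shows "ideal_generated s r m f \<subseteq> I"
  unfolding ideal_generated_def using assms by (intro Inter_lower) simp

locale ample_gpd =
  fixes s r :: "'a::topological_space \<Rightarrow> 'a" and m :: "'a \<Rightarrow> 'a \<Rightarrow> 'a" and iv :: "'a \<Rightarrow> 'a"
  assumes ample: "ample_groupoid s r m iv"
begin

lemma groupoid: "groupoid s r m iv"
  using ample unfolding ample_groupoid_def by simp

lemma s_s [simp]: "s (s x) = s x" and r_s [simp]: "r (s x) = s x"
  and s_r [simp]: "s (r x) = r x" and r_r [simp]: "r (r x) = r x"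
  using groupoid unfolding groupoid_def by auto

lemma s_m: "s x = r y \<Longrightarrow> s (m x y) = s y" and r_m: "s x = r y \<Longrightarrow> r (m x y) = r x"
  using groupoid unfolding groupoid_def by auto

lemma m_assoc: "s x = r y \<Longrightarrow> s y = r z \<Longrightarrow> m (m x y) z = m x (m y z)"
  using groupoid unfolding groupoid_def by blast

lemma m_r_left [simp]: "m (r x) x = x" and m_s_right [simp]: "m x (s x) = x"
  using groupoid unfolding groupoid_def by auto

lemma s_iv [simp]: "s (iv x) = r x" and r_iv [simp]: "r (iv x) = s x"
  and m_iv_right [simp]: "m x (iv x) = r x" and m_iv_left [simp]: "m (iv x) x = s x"
  using groupoid unfolding groupoid_def by auto

lemma iv_iv [simp]: "iv (iv x) = x"
proof -
  have "iv (iv x) = m (iv (iv x)) (m (iv x) x)"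
    using m_s_right[of "iv (iv x)"] by simp
  also have "\<dots> = m (m (iv (iv x)) (iv x)) x" by (rule m_assoc[symmetric]) auto
  finally show ?thesis by simp
qed

lemma mem_units_iff: "x \<in> units s \<longleftrightarrow> s x = x"
  unfolding units_def by (metis rangeE rangeI s_s)

lemma r_unit: "x \<in> units s \<Longrightarrow> r x = x"
  by (metis mem_units_iff r_s)

lemma s_in_units [simp]: "s x \<in> units s" and r_in_units [simp]: "r x \<in> units s"
  unfolding units_def by (metis rangeI, metis rangeI s_iv)

lemma local_homeo_s: "local_homeo_onto s (units s)"
  and local_homeo_r: "local_homeo_onto r (units s)"
  using ample unfolding ample_groupoid_def by blast+

lemma continuous_on_s: "continuous_on X s" and continuous_on_r: "continuous_on X r"
  and continuous_on_iv: "continuous_on X iv"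
  using ample local_homeo_onto_imp_continuous local_homeo_s local_homeo_r continuous_on_subset
  unfolding ample_groupoid_def by blast+

lemma continuous_on_m_compose:
  assumes "continuous_on X f" "continuous_on X g" "\<And>x. x \<in> X \<Longrightarrow> s (f x) = r (g x)"
  shows "continuous_on X (\<lambda>x. m (f x) (g x))"
proof -
  have "continuous_on {(x, y). s x = r y} (\<lambda>(x, y). m x y)"
    using ample unfolding ample_groupoid_def by blast
  then have "continuous_on X (\<lambda>x. (\<lambda>(x, y). m x y) (f x, g x))"
    by (rule continuous_on_compose2[OF _ continuous_on_Pair[OF assms(1,2)]]) (use assms(3) in auto)
  then show ?thesis by simp
qed

lemma Hausdorff_units: "Hausdorff_space (top_of_set (units s))"
  using ample unfolding ample_groupoid_def by blast

lemma open_units: "open (units s)"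
proof (rule open_subopen[THEN iffD2], rule ballI)
  fix x assume x: "x \<in> units s"
  obtain U where U: "open U" "x \<in> U" and h: "homeomorphic_map (top_of_set U) (top_of_set (s ` U)) s"
    using local_homeo_s unfolding local_homeo_onto_def by blast
  have "inj_on s U" using homeomorphic_imp_injective_map[OF h] by simp
  let ?T = "U \<inter> s -` U"
  have "open ?T"
    using U(1) continuous_on_s continuous_on_open_vimage[of UNIV s] by auto
  moreover have "x \<in> ?T" using x U mem_units_iff by auto
  moreover have "?T \<subseteq> units s"
  proof
    fix g assume "g \<in> ?T"
    then have "s (s g) = s g" "s g \<in> U" "g \<in> U" by auto
    then show "g \<in> units s" using \<open>inj_on s U\<close> mem_units_iff inj_onD by metis
  qed
  ultimately show "\<exists>T. open T \<and> x \<in> T \<and> T \<subseteq> units s" by blast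
qed

lemma openin_units_iff: "openin (top_of_set (units s)) D \<longleftrightarrow> open D \<and> D \<subseteq> units s"
  using open_units openin_open_eq by blast

lemma open_s_image: "open A \<Longrightarrow> open (s ` A)" and open_r_image: "open A \<Longrightarrow> open (r ` A)"
  using local_homeo_onto_open_image local_homeo_s local_homeo_r open_units by blast+

lemma open_vimage_s: "open A \<Longrightarrow> open (s -` A)" and open_vimage_r: "open A \<Longrightarrow> open (r -` A)"
  using continuous_on_s continuous_on_r continuous_on_open_vimage[of UNIV] by auto

lemma compact_open_units_base:
  assumes "open W" "W \<subseteq> units s" "x \<in> W"
  obtains K where "compact K" "open K" "x \<in> K" "K \<subseteq> W"
proof -
  have lc: "locally_compact_space (top_of_set (units s))"
    and td: "totally_disconnected_space (top_of_set (units s))"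
    using ample unfolding ample_groupoid_def by auto
  have "openin (top_of_set (units s)) W" using assms(1,2) openin_units_iff by blast
  then obtain K where "compact K" "openin (top_of_set (units s)) K" "x \<in> K" "K \<subseteq> W"
    using compact_openin_neighbourhood_base[OF lc Hausdorff_units td _ assms(3)] by blast
  then show thesis using that openin_units_iff by blast
qed

lemma compact_open_bisection_iff:
  "compact_open_bisection s r U \<longleftrightarrow> compact U \<and> open U \<and> inj_on s U \<and> inj_on r U"
proof -
  have "homeomorphic_map (top_of_set U) (top_of_set (s ` U)) s \<longleftrightarrow> inj_on s U"
    and "homeomorphic_map (top_of_set U) (top_of_set (r ` U)) r \<longleftrightarrow> inj_on r U"
    if "compact U"
    using homeomorphic_map_compact_iff_inj_on[OF that continuous_on_s Hausdorff_units]
      homeomorphic_map_compact_iff_inj_on[OF that continuous_on_r Hausdorff_units]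
    by (simp_all add: image_subset_iff)
  then show ?thesis unfolding compact_open_bisection_def bisection_def by blast
qed

lemma compact_open_bisection_units:
  assumes "K \<subseteq> units s" "compact K" "open K"
  shows "compact_open_bisection s r K"
proof -
  have "inj_on s K" "inj_on r K"
    using assms(1) mem_units_iff r_unit by (auto simp: inj_on_def subset_iff)
  then show ?thesis using assms by (simp add: compact_open_bisection_iff)
qed

lemma compact_open_bisection_iv_image:
  assumes "compact_open_bisection s r B"
  shows "compact_open_bisection s r (iv ` B)"
proof -
  have B: "compact B" "open B" "inj_on s B" "inj_on r B"
    using assms by (auto simp: compact_open_bisection_iff)
  have "iv ` B = iv -` B"
  proof (intro set_eqI iffI)
    fix x assume "x \<in> iv -` B"
    then have "iv (iv x) \<in> iv ` B" by blast
    then show "x \<in> iv ` B" by simp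
  qed auto
  then have "open (iv ` B)"
    using B(2) continuous_on_iv continuous_on_open_vimage[of UNIV iv] by auto
  moreover have "compact (iv ` B)"
    using B(1) continuous_on_iv compact_continuous_image by blast
  moreover have "inj_on s (iv ` B)" "inj_on r (iv ` B)"
    by (rule inj_on_imageI, simp add: comp_def B(3,4))+
  ultimately show ?thesis by (simp add: compact_open_bisection_iff)
qed

lemma compact_open_bisection_nhd:
  assumes "open Q" "g \<in> Q"
  obtains B where "compact_open_bisection s r B" "g \<in> B" "B \<subseteq> Q"
proof -
  obtain U1 where U1: "open U1" "g \<in> U1"
    and h1: "homeomorphic_map (top_of_set U1) (top_of_set (s ` U1)) s"
    using local_homeo_s unfolding local_homeo_onto_def by blast
  obtain U2 where U2: "open U2" "g \<in> U2"
    and h2: "homeomorphic_map (top_of_set U2) (top_of_set (r ` U2)) r"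
    using local_homeo_r unfolding local_homeo_onto_def by blast
  have inj1: "inj_on s U1" and inj2: "inj_on r U2"
    using homeomorphic_imp_injective_map[OF h1] homeomorphic_imp_injective_map[OF h2] by simp_all
  define N where "N = Q \<inter> U1 \<inter> U2"
  have "open N" "g \<in> N" using assms U1 U2 unfolding N_def by (simp_all add: open_Int)
  then have "open (s ` N)" "s ` N \<subseteq> units s" "s g \<in> s ` N"
    by (auto intro: open_s_image)
  then obtain K where K: "compact K" "open K" "s g \<in> K" "K \<subseteq> s ` N"
    by (rule compact_open_units_base)
  define B where "B = U1 \<inter> s -` K"
  have "K \<subseteq> s ` U1" using K(4) unfolding N_def by blast
  then have "compact B" unfolding B_def by (rule compact_Int_vimage_homeomorphic_map[OF h1 K(1)])
  have "B \<subseteq> N"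
  proof
    fix b assume "b \<in> B"
    then obtain c where "c \<in> N" "s b = s c" using K(4) unfolding B_def by blast
    moreover have "b \<in> U1" "c \<in> U1" using \<open>b \<in> B\<close> \<open>c \<in> N\<close> unfolding B_def N_def by blast+
    ultimately show "b \<in> N" using inj1 inj_onD by metis
  qed
  then have "inj_on s B" "inj_on r B"
    using inj_on_subset[OF inj1] inj_on_subset[OF inj2] unfolding N_def by blast+
  moreover have "open B" unfolding B_def using U1(1) K(2) open_vimage_s by blast
  ultimately have "compact_open_bisection s r B"
    using \<open>compact B\<close> by (simp add: compact_open_bisection_iff)
  moreover have "g \<in> B" "B \<subseteq> Q" using K(3) U1 \<open>B \<subseteq> N\<close> unfolding B_def N_def by blast+
  ultimately show thesis by (rule that)
qed

subsection \<open>Products of compact open bisections\<close>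

lemma bisection_s_inverse:
  assumes "compact_open_bisection s r B"
  obtains \<sigma> where "continuous_on (s ` B) \<sigma>" "\<And>t. t \<in> s ` B \<Longrightarrow> \<sigma> t \<in> B"
    "\<And>b. b \<in> B \<Longrightarrow> \<sigma> (s b) = b" "\<And>t. t \<in> s ` B \<Longrightarrow> s (\<sigma> t) = t"
proof -
  have "homeomorphic_map (top_of_set B) (top_of_set (s ` B)) s"
    using assms unfolding compact_open_bisection_def bisection_def by blast
  then obtain \<sigma> where h: "homeomorphic_maps (top_of_set B) (top_of_set (s ` B)) s \<sigma>"
    using homeomorphic_map_maps by blast
  then have "continuous_map (top_of_set (s ` B)) (top_of_set B) \<sigma>"
    unfolding homeomorphic_maps_def by blast
  then have "continuous_on (s ` B) \<sigma>" "\<And>t. t \<in> s ` B \<Longrightarrow> \<sigma> t \<in> B"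
    by (auto simp: continuous_map_subtopology_eu)
  moreover have "\<And>b. b \<in> B \<Longrightarrow> \<sigma> (s b) = b" "\<And>t. t \<in> s ` B \<Longrightarrow> s (\<sigma> t) = t"
    using h unfolding homeomorphic_maps_def by auto
  ultimately show thesis using that by blast
qed

lemma mult_set_eq_vimage:
  assumes p2: "\<And>t. t \<in> s ` U' \<Longrightarrow> \<psi> t \<in> U'" and p3: "\<And>b. b \<in> U' \<Longrightarrow> \<psi> (s b) = b"
    and p4: "\<And>t. t \<in> s ` U' \<Longrightarrow> s (\<psi> t) = t"
  shows "mult_set s r m U U' = (\<lambda>x. m x (iv (\<psi> (s x)))) -` U \<inter> s -` (s ` U')"
proof
  show "mult_set s r m U U' \<subseteq> (\<lambda>x. m x (iv (\<psi> (s x)))) -` U \<inter> s -` (s ` U')"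
  proof
    fix x assume "x \<in> mult_set s r m U U'"
    then obtain a b where ab: "x = m a b" "s a = r b" "a \<in> U" "b \<in> U'"
      unfolding mult_set_def by blast
    have sx: "s x = s b" using ab s_m by simp
    have "m x (iv b) = m a (m b (iv b))" unfolding ab(1) by (rule m_assoc) (use ab in auto)
    also have "\<dots> = a" using ab by (simp, metis m_s_right)
    finally show "x \<in> (\<lambda>x. m x (iv (\<psi> (s x)))) -` U \<inter> s -` (s ` U')"
      using ab sx p3 by auto
  qed
  show "(\<lambda>x. m x (iv (\<psi> (s x)))) -` U \<inter> s -` (s ` U') \<subseteq> mult_set s r m U U'"
  proof
    fix x assume x: "x \<in> (\<lambda>x. m x (iv (\<psi> (s x)))) -` U \<inter> s -` (s ` U')"
    define b where "b = \<psi> (s x)"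
    define a where "a = m x (iv b)"
    have b: "b \<in> U'" "s b = s x" using x p2 p4 unfolding b_def by auto
    have "a \<in> U" using x unfolding a_def b_def by simp
    moreover have "s a = r b" unfolding a_def using b by (simp add: s_m)
    moreover have "m a b = m x (m (iv b) b)" unfolding a_def by (rule m_assoc) (use b in auto)
    then have "m a b = x" using b by simp
    ultimately show "x \<in> mult_set s r m U U'" unfolding mult_set_def using b by blast
  qed
qed

lemma open_mult_set:
  assumes U: "compact_open_bisection s r U" and U': "compact_open_bisection s r U'"
  shows "open (mult_set s r m U U')"
proof -
  obtain \<psi> where p1: "continuous_on (s ` U') \<psi>" and p2: "\<And>t. t \<in> s ` U' \<Longrightarrow> \<psi> t \<in> U'"
    and p3: "\<And>b. b \<in> U' \<Longrightarrow> \<psi> (s b) = b" and p4: "\<And>t. t \<in> s ` U' \<Longrightarrow> s (\<psi> t) = t"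
    using bisection_s_inverse[OF U'] by blast
  define \<Omega> where "\<Omega> = s -` (s ` U')"
  have "open \<Omega>" unfolding \<Omega>_def
    using U' open_s_image open_vimage_s unfolding compact_open_bisection_def by blast
  have "continuous_on \<Omega> (\<lambda>x. \<psi> (s x))"
    by (rule continuous_on_compose2[OF p1 continuous_on_s]) (auto simp: \<Omega>_def)
  then have "continuous_on \<Omega> (\<lambda>x. iv (\<psi> (s x)))"
    by (rule continuous_on_compose2[OF continuous_on_iv]) auto
  then have "continuous_on \<Omega> (\<lambda>x. m x (iv (\<psi> (s x))))"
    by (rule continuous_on_m_compose[OF continuous_on_id]) (auto simp: \<Omega>_def p4)
  moreover have "open U" using U unfolding compact_open_bisection_def by blast
  ultimately have "open ((\<lambda>x. m x (iv (\<psi> (s x)))) -` U \<inter> \<Omega>)"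
    unfolding continuous_on_open_vimage[OF \<open>open \<Omega>\<close>] by simp
  then show ?thesis by (simp add: mult_set_eq_vimage[OF p2 p3 p4] \<Omega>_def)
qed

lemma mult_set_eq_image:
  assumes q2: "\<And>t. t \<in> s ` U \<Longrightarrow> \<sigma> t \<in> U" and q3: "\<And>b. b \<in> U \<Longrightarrow> \<sigma> (s b) = b"
    and q4: "\<And>t. t \<in> s ` U \<Longrightarrow> s (\<sigma> t) = t"
  shows "mult_set s r m U U' = (\<lambda>b. m (\<sigma> (r b)) b) ` {b \<in> U'. r b \<in> s ` U}"
proof
  show "mult_set s r m U U' \<subseteq> (\<lambda>b. m (\<sigma> (r b)) b) ` {b \<in> U'. r b \<in> s ` U}"
  proof
    fix x assume "x \<in> mult_set s r m U U'"
    then obtain a b where ab: "x = m a b" "s a = r b" "a \<in> U" "b \<in> U'"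
      unfolding mult_set_def by blast
    then have "\<sigma> (r b) = a" "r b \<in> s ` U" using q3 by (metis, metis image_eqI)
    then show "x \<in> (\<lambda>b. m (\<sigma> (r b)) b) ` {b \<in> U'. r b \<in> s ` U}" using ab by blast
  qed
  show "(\<lambda>b. m (\<sigma> (r b)) b) ` {b \<in> U'. r b \<in> s ` U} \<subseteq> mult_set s r m U U'"
    using q2 q4 unfolding mult_set_def by fastforce
qed

lemma compact_mult_set:
  assumes U: "compact_open_bisection s r U" and U': "compact_open_bisection s r U'"
  shows "compact (mult_set s r m U U')"
proof -
  obtain \<sigma> where q1: "continuous_on (s ` U) \<sigma>" and q2: "\<And>t. t \<in> s ` U \<Longrightarrow> \<sigma> t \<in> U"
    and q3: "\<And>b. b \<in> U \<Longrightarrow> \<sigma> (s b) = b" and q4: "\<And>t. t \<in> s ` U \<Longrightarrow> s (\<sigma> t) = t"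
    using bisection_s_inverse[OF U] by blast
  have "compact U" "compact U'" using U U' unfolding compact_open_bisection_def by auto
  define D where "D = {b \<in> U'. r b \<in> s ` U}"
  have "compactin (top_of_set (units s)) (s ` U)"
    using \<open>compact U\<close> compact_continuous_image continuous_on_s
    by (auto simp: compactin_subtopology)
  then have "closedin (top_of_set (units s)) (s ` U)"
    using compactin_imp_closedin Hausdorff_units by blast
  moreover have "continuous_map (top_of_set U') (top_of_set (units s)) r"
    using continuous_on_r by (auto simp: continuous_map_subtopology_eu)
  ultimately have "closedin (top_of_set U') {b \<in> topspace (top_of_set U'). r b \<in> s ` U}"
    using closedin_continuous_map_preimage by blast
  then have "closedin (top_of_set U') D" unfolding D_def by simp
  then have "compact D" using closedin_compact \<open>compact U'\<close> by blast
  have "continuous_on D (\<lambda>b. \<sigma> (r b))"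
    by (rule continuous_on_compose2[OF q1 continuous_on_r]) (auto simp: D_def)
  then have "continuous_on D (\<lambda>b. m (\<sigma> (r b)) b)"
    using continuous_on_m_compose[OF _ continuous_on_id] q4 by (auto simp: D_def)
  then have "compact ((\<lambda>b. m (\<sigma> (r b)) b) ` D)"
    using \<open>compact D\<close> by (rule compact_continuous_image)
  then show ?thesis by (simp add: mult_set_eq_image[OF q2 q3 q4] D_def)
qed

lemma inj_on_s_mult_set:
  assumes "inj_on s U" "inj_on s U'"
  shows "inj_on s (mult_set s r m U U')"
proof (rule inj_onI)
  fix x y assume "x \<in> mult_set s r m U U'" "y \<in> mult_set s r m U U'" "s x = s y"
  then obtain a b a' b' where "x = m a b" "s a = r b" "a \<in> U" "b \<in> U'"
    and "y = m a' b'" "s a' = r b'" "a' \<in> U" "b' \<in> U'"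
    unfolding mult_set_def by blast
  moreover from this have "b = b'" using \<open>s x = s y\<close> s_m inj_onD[OF assms(2)] by metis
  ultimately show "x = y" using inj_onD[OF assms(1)] by metis
qed

lemma inj_on_r_mult_set:
  assumes "inj_on r U" "inj_on r U'"
  shows "inj_on r (mult_set s r m U U')"
proof (rule inj_onI)
  fix x y assume "x \<in> mult_set s r m U U'" "y \<in> mult_set s r m U U'" "r x = r y"
  then obtain a b a' b' where "x = m a b" "s a = r b" "a \<in> U" "b \<in> U'"
    and "y = m a' b'" "s a' = r b'" "a' \<in> U" "b' \<in> U'"
    unfolding mult_set_def by blast
  moreover from this have "a = a'" using \<open>r x = r y\<close> r_m inj_onD[OF assms(1)] by metis
  ultimately show "x = y" using inj_onD[OF assms(2)] by metis
qed

lemma compact_open_bisection_mult_set: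
  assumes "compact_open_bisection s r U" "compact_open_bisection s r U'"
  shows "compact_open_bisection s r (mult_set s r m U U')"
  using assms open_mult_set compact_mult_set inj_on_s_mult_set inj_on_r_mult_set
  by (simp add: compact_open_bisection_iff)

lemma mult_set_units_right:
  assumes "s ` B \<subseteq> V" "V \<subseteq> units s"
  shows "mult_set s r m B V = B"
proof (intro set_eqI iffI)
  fix x assume "x \<in> mult_set s r m B V"
  then obtain a b where x: "x = m a b" and "s a = r b" "a \<in> B" "b \<in> V"
    unfolding mult_set_def by blast
  then have "b = s a" using assms(2) r_unit by (metis subsetD)
  then show "x \<in> B" using x \<open>a \<in> B\<close> by simp
next
  fix x assume "x \<in> B"
  then have "x = m x (s x)" "s x = r (s x)" "s x \<in> V" using assms(1) by auto
  then show "x \<in> mult_set s r m B V" using \<open>x \<in> B\<close> unfolding mult_set_def by blast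
qed

lemma mult_set_iv_right:
  assumes "inj_on s B"
  shows "mult_set s r m B (iv ` B) = r ` B"
proof (intro set_eqI iffI)
  fix x assume "x \<in> mult_set s r m B (iv ` B)"
  then obtain a c where x: "x = m a (iv c)" and "s a = s c" "a \<in> B" "c \<in> B"
    unfolding mult_set_def by auto
  then have "a = c" using inj_onD[OF assms] by metis
  then show "x \<in> r ` B" using x \<open>c \<in> B\<close> by simp
next
  fix x assume "x \<in> r ` B"
  then obtain b where "b \<in> B" "x = m b (iv b)" by auto
  then show "x \<in> mult_set s r m B (iv ` B)" unfolding mult_set_def by force
qed

subsection \<open>Ideals and minimality\<close>

lemma conv_in_steinberg:
  assumes "a \<in> steinberg s r" "f \<in> steinberg s r"
  shows "conv s r m a f \<in> steinberg s r"
proof -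
  obtain F H where F: "finite F" "\<forall>U\<in>F. compact_open_bisection s r U" "a = (\<lambda>g. \<exists>U\<in>F. g \<in> U)"
    and H: "finite H" "\<forall>U\<in>H. compact_open_bisection s r U" "f = (\<lambda>g. \<exists>U\<in>H. g \<in> U)"
    using assms unfolding steinberg_def by blast
  have "\<forall>W\<in>(\<lambda>(U, U'). mult_set s r m U U') ` (F \<times> H). compact_open_bisection s r W"
    using F(2) H(2) compact_open_bisection_mult_set by auto
  then show ?thesis unfolding F(3) H(3) conv_Bex_chi steinberg_def
    using F(1) H(1)
    by (intro CollectI exI[of _ "(\<lambda>(U, U'). mult_set s r m U U') ` (F \<times> H)"]) simp
qed

lemma is_ideal_steinberg: "is_ideal s r m (steinberg s r)"
  unfolding is_ideal_def using steinberg_zero bplus_in_steinberg conv_in_steinberg by blast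

lemma ideal_generated_eq_steinberg:
  assumes "f \<in> steinberg s r" "\<And>I. is_ideal s r m I \<Longrightarrow> f \<in> I \<Longrightarrow> steinberg s r \<subseteq> I"
  shows "ideal_generated s r m f = steinberg s r"
proof (rule subset_antisym)
  show "ideal_generated s r m f \<subseteq> steinberg s r"
    using is_ideal_steinberg assms(1) by (rule ideal_generated_subset)
  show "steinberg s r \<subseteq> ideal_generated s r m f"
    unfolding ideal_generated_def by (intro Inter_greatest) (simp add: assms(2))
qed

lemma minimal_imp_orbit_meets:
  assumes "minimal_groupoid s r" "open V" "V \<subseteq> units s" "v \<in> V" "x \<in> units s"
  obtains g where "r g = x" "s g \<in> V"
proof -
  define D where "D = r ` (s -` V)"
  have "D \<subseteq> units s" unfolding D_def by auto
  moreover have "open D" unfolding D_def by (intro open_r_image open_vimage_s assms(2))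
  ultimately have "openin (top_of_set (units s)) D" by (simp add: openin_units_iff)
  moreover have "invariant s r D" unfolding invariant_def
  proof (intro conjI allI impI)
    show "D \<subseteq> units s" by fact
    fix h assume "s h \<in> D"
    then obtain g where "s h = r g" "s g \<in> V" unfolding D_def by blast
    then have "r h = r (m h g)" "s (m h g) \<in> V" using r_m s_m by auto
    then show "r h \<in> D" unfolding D_def by blast
  qed
  moreover have "v \<in> D"
    using assms(3,4) mem_units_iff r_unit unfolding D_def by (metis image_eqI subsetD vimageI)
  ultimately have "D = units s" using assms(1) unfolding minimal_groupoid_def by blast
  then have "x \<in> r ` (s -` V)" using assms(5) unfolding D_def by simp
  then show thesis using that by auto
qed

lemma chi_r_image_mem_ideal:
  assumes I: "is_ideal s r m I" "chi V \<in> I" and "V \<subseteq> units s"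
    and B: "compact_open_bisection s r B" "s ` B \<subseteq> V"
  shows "chi (r ` B) \<in> I"
proof -
  have conv_mem: "\<And>a f. a \<in> steinberg s r \<Longrightarrow> f \<in> I \<Longrightarrow> conv s r m a f \<in> I \<and> conv s r m f a \<in> I"
    using I(1) unfolding is_ideal_def by blast
  have "chi B = conv s r m (chi B) (chi V)"
    by (simp add: conv_chi mult_set_units_right B(2) \<open>V \<subseteq> units s\<close>)
  then have "chi B \<in> I" using conv_mem[OF chi_in_steinberg[OF B(1)] I(2)] by simp
  moreover have "chi (r ` B) = conv s r m (chi B) (chi (iv ` B))"
    using B(1) by (simp add: conv_chi mult_set_iv_right compact_open_bisection_iff)
  ultimately show ?thesis
    using conv_mem[OF chi_in_steinberg[OF compact_open_bisection_iv_image[OF B(1)]]] by simp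
qed

lemma minimal_imp_steinberg_subset_ideal:
  assumes min: "minimal_groupoid s r" and V: "V \<noteq> {}" "V \<subseteq> units s" "open V"
    and I: "is_ideal s r m I" "chi V \<in> I"
  shows "steinberg s r \<subseteq> I"
proof -
  have zero: "(\<lambda>_. False) \<in> I" and plus: "\<forall>f\<in>I. \<forall>h\<in>I. bplus f h \<in> I"
    using I(1) unfolding is_ideal_def by blast+
  have chi_units_mem: "chi W \<in> I" if W: "W \<subseteq> units s" "compact W" "open W" for W
  proof (rule chi_compact_mem_if_locally_mem[OF zero plus W(2)])
    fix x assume "x \<in> W"
    obtain g where "r g = x" "s g \<in> V"
      using minimal_imp_orbit_meets[OF min V(3,2)] V(1) W(1) \<open>x \<in> W\<close> by blast
    moreover have "open (s -` V \<inter> r -` W)"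
      using open_vimage_s open_vimage_r V(3) W(3) by blast
    ultimately obtain B where B: "compact_open_bisection s r B" "g \<in> B" "B \<subseteq> s -` V \<inter> r -` W"
      using compact_open_bisection_nhd \<open>x \<in> W\<close> by (metis IntI vimageI)
    then have "chi (r ` B) \<in> I" using chi_r_image_mem_ideal[OF I V(2)] by blast
    moreover have "open (r ` B)" using B(1) open_r_image compact_open_bisection_iff by blast
    ultimately show "\<exists>N. open N \<and> x \<in> N \<and> N \<subseteq> W \<and> chi N \<in> I"
      using B \<open>r g = x\<close> by blast
  qed
  show ?thesis
  proof (rule steinberg_subset_ideal[OF I(1)])
    fix U assume U: "compact_open_bisection s r U"
    then have "compact (s ` U)" "open (s ` U)"
      using compact_continuous_image continuous_on_s open_s_image
      unfolding compact_open_bisection_iff by blast+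
    then have "chi (s ` U) \<in> I" using chi_units_mem[of "s ` U"] by (simp add: image_subset_iff)
    moreover have "chi U = conv s r m (chi U) (chi (s ` U))"
      by (simp add: conv_chi mult_set_units_right image_subset_iff)
    ultimately show "chi U \<in> I"
      using I(1) chi_in_steinberg[OF U] unfolding is_ideal_def by metis
  qed
qed

lemma minimal_imp_ideal_generated_eq_steinberg:
  assumes "minimal_groupoid s r" "V \<noteq> {}" "V \<subseteq> units s" "compact V" "open V"
  shows "ideal_generated s r m (chi V) = steinberg s r"
  using chi_in_steinberg[OF compact_open_bisection_units[OF assms(3-5)]]
    minimal_imp_steinberg_subset_ideal[OF assms(1-3,5)]
  by (rule ideal_generated_eq_steinberg)

lemma is_ideal_supported_on_invariant:
  assumes "invariant s r D"
  shows "is_ideal s r m {f \<in> steinberg s r. \<forall>g. f g \<longrightarrow> s g \<in> D}"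
proof -
  let ?J = "{f \<in> steinberg s r. \<forall>g. f g \<longrightarrow> s g \<in> D}"
  have left: "s g \<in> D" if supp: "\<forall>g. f g \<longrightarrow> s g \<in> D" and prod: "conv s r m a f g" for a f g
  proof -
    obtain x y where "s x = r y" "m x y = g" "f y" using prod unfolding conv_def by blast
    then show ?thesis using supp s_m by auto
  qed
  have right: "s g \<in> D" if supp: "\<forall>g. f g \<longrightarrow> s g \<in> D" and prod: "conv s r m f a g" for a f g
  proof -
    obtain x y where "s x = r y" "m x y = g" "f x" using prod unfolding conv_def by blast
    then have "r (iv y) \<in> D" using supp assms unfolding invariant_def by (metis s_iv)
    then show ?thesis using \<open>s x = r y\<close> \<open>m x y = g\<close> s_m by auto
  qed
  have "bplus f h \<in> ?J" if "f \<in> ?J" "h \<in> ?J" for f h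
  proof -
    have "bplus f h \<in> steinberg s r" using that bplus_in_steinberg by blast
    moreover have "\<forall>g. bplus f h g \<longrightarrow> s g \<in> D" using that unfolding bplus_def by blast
    ultimately show ?thesis by blast
  qed
  moreover have "conv s r m a f \<in> ?J \<and> conv s r m f a \<in> ?J" if "a \<in> steinberg s r" "f \<in> ?J" for a f
    using that by (auto intro!: conv_in_steinberg intro: left right)
  moreover have "(\<lambda>_. False) \<in> ?J" using steinberg_zero by simp
  ultimately show ?thesis unfolding is_ideal_def by (intro conjI) blast+
qed

lemma minimal_if_ideal_generated_eq_steinberg:
  assumes "\<forall>V. V \<noteq> {} \<and> V \<subseteq> units s \<and> compact V \<and> openin (top_of_set (units s)) V \<longrightarrow>
    ideal_generated s r m (chi V) = steinberg s r"
  shows "minimal_groupoid s r"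
  unfolding minimal_groupoid_def
proof (intro allI impI)
  fix D assume D: "openin (top_of_set (units s)) D \<and> invariant s r D"
  then have "open D" "D \<subseteq> units s" by (auto simp: openin_units_iff)
  define J where "J = {f \<in> steinberg s r. \<forall>g. f g \<longrightarrow> s g \<in> D}"
  have chi_mem_J: "chi K \<in> J \<longleftrightarrow> K \<subseteq> D" if "K \<subseteq> units s" "compact K" "open K" for K
    using that chi_in_steinberg[OF compact_open_bisection_units[OF that]]
    by (auto simp: J_def chi_def subset_iff mem_units_iff)
  show "D = {} \<or> D = units s"
  proof (rule ccontr)
    assume "\<not> (D = {} \<or> D = units s)"
    then obtain y z where "y \<in> D" "z \<in> units s" "z \<notin> D" using \<open>D \<subseteq> units s\<close> by blast
    obtain K where K: "compact K" "open K" "y \<in> K" "K \<subseteq> D"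
      using compact_open_units_base[OF \<open>open D\<close> \<open>D \<subseteq> units s\<close> \<open>y \<in> D\<close>] by blast
    obtain K' where K': "compact K'" "open K'" "z \<in> K'" "K' \<subseteq> units s"
      using compact_open_units_base[OF open_units subset_refl \<open>z \<in> units s\<close>] by blast
    have "is_ideal s r m J" unfolding J_def using D by (simp add: is_ideal_supported_on_invariant)
    moreover have "chi K \<in> J" using chi_mem_J K \<open>D \<subseteq> units s\<close> by blast
    ultimately have "ideal_generated s r m (chi K) \<subseteq> J" by (rule ideal_generated_subset)
    moreover have "K \<noteq> {}" "K \<subseteq> units s" using K \<open>D \<subseteq> units s\<close> by auto
    then have "ideal_generated s r m (chi K) = steinberg s r"
      using assms K(1,2) by (simp add: openin_units_iff)
    ultimately have "steinberg s r \<subseteq> J" by simp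
    then have "chi K' \<in> J"
      using chi_in_steinberg[OF compact_open_bisection_units[OF K'(4,1,2)]] by (rule subsetD)
    then have "K' \<subseteq> D" using chi_mem_J[OF K'(4,1,2)] by simp
    then show False using K'(3) \<open>z \<notin> D\<close> by blast
  qed
qed

end

theorem lemma3p3:
  fixes s r :: "'a::topological_space \<Rightarrow> 'a" and m :: "'a \<Rightarrow> 'a \<Rightarrow> 'a" and iv :: "'a \<Rightarrow> 'a"
  assumes "ample_groupoid s r m iv"
  shows "minimal_groupoid s r \<longleftrightarrow>
    (\<forall>V. V \<noteq> {} \<and> V \<subseteq> units s \<and> compact V \<and> openin (top_of_set (units s)) V \<longrightarrow>
         ideal_generated s r m (chi V) = steinberg s r)"
proof -
  interpret ample_gpd s r m iv by (rule ample_gpd.intro[OF assms])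
  show ?thesis
  proof (intro iffI allI impI)
    fix V assume "minimal_groupoid s r"
      and "V \<noteq> {} \<and> V \<subseteq> units s \<and> compact V \<and> openin (top_of_set (units s)) V"
    then show "ideal_generated s r m (chi V) = steinberg s r"
      by (intro minimal_imp_ideal_generated_eq_steinberg) (auto simp: openin_units_iff)
  qed (rule minimal_if_ideal_generated_eq_steinberg)
qed

end
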